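(* For each $n\ge 0$ there is a bijection $\phi$ from the set of Dyck $n$-paths to itself such that: (1) for every Dyck path $P$, the number of valleys $DU$ in $P$ equals the number of occurrences of $DXD$ in $\phi(P)$; (2) $\phi$ restricts to a bijection from the Dyck $n$-paths whose terminal descent has even length (including the empty path) onto the hill-free Dyck $n$-paths; (3) $\phi$ restricts to a bijection from the nonempty Dyck $n$-paths all of whose descents to ground level have odd length onto the Dyck $n$-paths that start $UD$.
   Context: A Dyck $n$-path is a path from $(0,0)$ to $(2n,0)$ with $n$ upsteps $U=(1,1)$ and $n$ downsteps $D=(1,-1)$ never going below the $x$-axis, written as a word in $U,D$. A valley is an occurrence of $DU$; a $DXD$ is an occurrence of $DUD$ or $DDD$ as consecutive steps. A descent is a maximal run of consecutive $D$s; the terminal descent is the last descent (length $0$ for the empty path). A descent to ground level is a descent ending on the $x$-axis. A hill is a peak $UD$ whose top vertex is at height $1$; a path is hill-free if it has no hills. *)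

theory Defs
  imports Main
begin

datatype step = U | D

definition ht :: "step list \<Rightarrow> int" where
  "ht w = int (count_list w U) - int (count_list w D)"

definition dyck :: "nat \<Rightarrow> step list \<Rightarrow> bool" where
  "dyck n w \<longleftrightarrow> length w = 2 * n \<and> ht w = 0 \<and>
     (\<forall>k \<le> length w. ht (take k w) \<ge> 0)"

definition dyck_paths :: "nat \<Rightarrow> step list set" where
  "dyck_paths n = {w. dyck n w}"

definition valleys :: "step list \<Rightarrow> nat" where
  "valleys w = card {i. i + 1 < length w \<and> w ! i = D \<and> w ! (i+1) = U}"

definition dxd :: "step list \<Rightarrow> nat" where
  "dxd w = card {i. i + 2 < length w \<and> w ! i = D \<and> w ! (i+2) = D}"

definition term_desc :: "step list \<Rightarrow> nat" where
  "term_desc w = length (takeWhile (\<lambda>s. s = D) (rev w))"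

(* A descent ends at j iff w!(j-1) = D and
   (j = length w or w!j = U). *)
definition all_ground_desc_odd :: "step list \<Rightarrow> bool" where
  "all_ground_desc_odd w \<longleftrightarrow>
     (\<forall>j. 0 < j \<and> j \<le> length w \<and> w ! (j - 1) = D \<and> (j = length w \<or> w ! j = U)
          \<and> ht (take j w) = 0
        \<longrightarrow> odd (length (takeWhile (\<lambda>s. s = D) (rev (take j w)))))"

definition hill_free :: "step list \<Rightarrow> bool" where
  "hill_free w \<longleftrightarrow>
     \<not> (\<exists>i. i + 1 < length w \<and> w ! i = U \<and> w ! (i+1) = D \<and> ht (take (i+1) w) = 1)"

definition starts_UD :: "step list \<Rightarrow> bool" where
  "starts_UD w \<longleftrightarrow> take 2 w = [U, D]"

end

theory Submission
  imports Defs
begin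

text \<open>
  Cutting a nonempty Dyck path at its last return to the axis writes it uniquely as
  \<open>Q U R D\<close> with Dyck paths \<open>Q\<close> and \<open>R\<close>; this identifies Dyck \<open>n\<close>-paths with binary
  trees with \<open>n\<close> nodes (left subtree \<open>R\<close>, right subtree \<open>Q\<close>). Every statistic of the
  theorem obeys a simple recursion on these trees: for instance \<open>Q U R D\<close> has the valleys
  of \<open>Q\<close> and of \<open>R\<close> plus one more if \<open>Q\<close> is nonempty, and its terminal descent is one
  longer than that of \<open>R\<close>. The bijection is defined by a recursion on trees that turns
  the valley recursion into the DXD recursion, even terminal descent into hill-freeness
  and odd ground descents into an initial \<open>UD\<close>. It preserves size and is injective,
  hence a permutation of the finite set of Dyck \<open>n\<close>-paths.
\<close>

datatype tree = Leaf | Node tree tree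

fun path_of :: "tree \<Rightarrow> step list" where
  "path_of Leaf = []"
| "path_of (Node a b) = path_of b @ U # path_of a @ [D]"

subsection \<open>Dyck paths as binary trees\<close>

lemma ht_Nil [simp]: "ht [] = 0"
  and ht_Cons [simp]: "ht (x # w) = (if x = U then 1 else -1) + ht w"
  by (cases x; simp add: ht_def)+

lemma ht_append [simp]: "ht (xs @ ys) = ht xs + ht ys"
  by (induction xs) auto

lemma length_path_of [simp]: "length (path_of t) = 2 * size t"
  by (induction t) auto

lemma ht_path_of [simp]: "ht (path_of t) = 0"
  by (induction t) auto

lemma path_of_eq_Nil_iff [simp]: "path_of t = [] \<longleftrightarrow> t = Leaf"
  by (cases t) auto

lemma path_of_snoc_D_eq_Cons: "\<exists>v. path_of a @ [D] = (if a = Leaf then D else U) # v"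
proof -
  have "hd (path_of a @ [D]) = (if a = Leaf then D else U)"
    by (induction a) (auto simp: hd_append)
  then show ?thesis
    by (metis list.collapse snoc_eq_iff_butlast)
qed

lemma path_of_Node_snoc: "\<exists>w. path_of (Node a b) = w @ [if a = Leaf then U else D, D]"
  by (cases a) auto

lemma ht_take_path_of_nonneg: "0 \<le> ht (take k (path_of t))"
proof (induction t arbitrary: k)
  case (Node a b)
  then show ?case
    by (cases "k \<le> length (path_of b)") (auto simp: take_Cons' min_def not_le)
qed simp

lemma ht_take_path_of_Node_pos:
  assumes "length (path_of b) < k" "k < length (path_of (Node a b))"
  shows "0 < ht (take k (path_of (Node a b)))"
proof -
  obtain j where k: "k = length (path_of b) + Suc j" and "j \<le> length (path_of a)"
    using assms by (auto simp del: length_path_of dest!: less_imp_Suc_add)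
  then have "take k (path_of (Node a b)) = path_of b @ U # take j (path_of a)"
    by (simp del: length_path_of)
  then show ?thesis
    using ht_take_path_of_nonneg[of j a] by simp
qed

lemma length_path_of_right_le:
  assumes "path_of (Node a b) = path_of (Node a' b')"
  shows "length (path_of b') \<le> length (path_of b)"
proof (rule ccontr)
  assume "\<not> ?thesis"
  moreover have "length (path_of b') < length (path_of (Node a b))"
    unfolding assms by (simp del: length_path_of)
  ultimately have "0 < ht (take (length (path_of b')) (path_of (Node a b)))"
    by (intro ht_take_path_of_Node_pos) simp_all
  then show False
    unfolding assms by (simp del: length_path_of)
qed

lemma inj_path_of: "inj path_of"
proof (rule injI)
  show "s = t" if "path_of s = path_of t" for s t
    using that
  proof (induction s arbitrary: t)
    case Leaf
    then show ?case by (metis path_of.simps(1) path_of_eq_Nil_iff)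
  next
    case (Node a b)
    then obtain a' b' where t: "t = Node a' b'"
      by (cases t) auto
    with Node.prems have "length (path_of b) = length (path_of b')"
      using length_path_of_right_le le_antisym by metis
    with Node.prems t have "path_of b = path_of b'" "path_of a = path_of a'"
      by auto
    with Node.IH t show ?case by simp
  qed
qed

text \<open>Stated for all paths staying weakly above the axis, so that the induction can add one
  step at a time.\<close>

lemma nonneg_path_decomposition:
  assumes "\<forall>k \<le> length w. 0 \<le> ht (take k w)"
  shows "\<exists>t ts. w = path_of t @ concat (map (\<lambda>s. U # path_of s) ts) \<and> int (length ts) = ht w"
  using assms
proof (induction w rule: rev_induct)
  case Nil
  show ?case by (intro exI[of _ Leaf] exI[of _ "[]"]) simp
next
  case (snoc x w)
  have "\<forall>k \<le> length w. 0 \<le> ht (take k w)"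
  proof (intro allI impI)
    fix k assume "k \<le> length w"
    then show "0 \<le> ht (take k w)" using snoc.prems[rule_format, of k] by simp
  qed
  with snoc.IH obtain t ts where w: "w = path_of t @ concat (map (\<lambda>s. U # path_of s) ts)"
    and ts: "int (length ts) = ht w"
    by blast
  show ?case
  proof (cases x)
    case U
    with w ts show ?thesis by (intro exI[of _ t] exI[of _ "ts @ [Leaf]"]) simp
  next
    case D
    from snoc.prems have "0 \<le> ht (w @ [x])" by (metis order_refl take_all)
    with D ts obtain ts' s where ts': "ts = ts' @ [s]"
      by (cases ts rule: rev_cases) auto
    show ?thesis
    proof (cases ts' rule: rev_cases)
      case Nil
      with w ts ts' D show ?thesis by (intro exI[of _ "Node s t"] exI[of _ "[]"]) simp
    next
      case (snoc ts'' r)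
      with w ts ts' D show ?thesis by (intro exI[of _ t] exI[of _ "ts'' @ [Node s r]"]) simp
    qed
  qed
qed

lemma dyck_iff_path_of: "dyck n w \<longleftrightarrow> (\<exists>t. w = path_of t \<and> size t = n)"
proof
  assume "dyck n w"
  then obtain t ts where "w = path_of t @ concat (map (\<lambda>s. U # path_of s) ts)" "int (length ts) = 0"
    using nonneg_path_decomposition unfolding dyck_def by metis
  with \<open>dyck n w\<close> show "\<exists>t. w = path_of t \<and> size t = n"
    unfolding dyck_def by auto
next
  assume "\<exists>t. w = path_of t \<and> size t = n"
  then show "dyck n w"
    unfolding dyck_def using ht_take_path_of_nonneg by auto
qed

lemma dyck_paths_eq_image: "dyck_paths n = path_of ` {t. size t = n}"
  unfolding dyck_paths_def by (auto simp: dyck_iff_path_of)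

lemma finite_dyck_paths: "finite (dyck_paths n)"
proof (rule finite_subset)
  show "dyck_paths n \<subseteq> {w. set w \<subseteq> UNIV \<and> length w = 2 * n}"
    unfolding dyck_paths_def dyck_def by auto
  have "(UNIV :: step set) = {U, D}"
    using step.exhaust by auto
  then have "finite (UNIV :: step set)"
    by (metis finite.emptyI finite.insertI)
  then show "finite {w. set w \<subseteq> (UNIV :: step set) \<and> length w = 2 * n}"
    by (rule finite_lists_length_eq)
qed

definition suffix_count :: "('a list \<Rightarrow> bool) \<Rightarrow> 'a list \<Rightarrow> nat" where
  "suffix_count P w = card {i. i < length w \<and> P (drop i w)}"

lemma suffix_count_Nil [simp]: "suffix_count P [] = 0"
  by (simp add: suffix_count_def)

lemma suffix_count_Cons [simp]:
  "suffix_count P (x # w) = (if P (x # w) then 1 else 0) + suffix_count P w"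
proof -
  have "{i. i < length (x # w) \<and> P (drop i (x # w))}
      = {i. i = 0 \<and> P (x # w)} \<union> Suc ` {i. i < length w \<and> P (drop i w)}"
    by (auto simp: image_iff less_Suc_eq_0_disj)
  moreover have "0 \<notin> Suc ` {i. i < length w \<and> P (drop i w)}"
    by auto
  ultimately show ?thesis
    unfolding suffix_count_def by (simp add: card_image)
qed

lemma suffix_count_short:
  assumes "\<And>u. length u \<le> k \<Longrightarrow> \<not> P u" "length w \<le> k"
  shows "suffix_count P w = 0"
  using assms unfolding suffix_count_def by simp

lemma suffix_count_append:
  assumes local: "\<And>u v. k < length u \<Longrightarrow> P (u @ v) \<longleftrightarrow> P u"
    and short: "\<And>u. length u \<le> k \<Longrightarrow> \<not> P u"
  shows "suffix_count P (xs @ ys) = suffix_count P xs + suffix_count P (drop (length xs - k) xs @ ys)"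
proof (induction xs)
  case (Cons x xs)
  show ?case
  proof (cases "k \<le> length xs")
    case True
    with Cons.IH local[of "x # xs" ys] show ?thesis
      by (simp add: Suc_diff_le)
  next
    case False
    then have "suffix_count P (x # xs) = 0"
      by (intro suffix_count_short[of k P] short) simp_all
    with False show ?thesis
      by simp
  qed
qed simp

definition starts_with_DU :: "step list \<Rightarrow> bool" where
  "starts_with_DU u \<longleftrightarrow> 1 < length u \<and> u ! 0 = D \<and> u ! 1 = U"

definition starts_with_DXD :: "step list \<Rightarrow> bool" where
  "starts_with_DXD u \<longleftrightarrow> 2 < length u \<and> u ! 0 = D \<and> u ! 2 = D"

lemma valleys_eq_suffix_count: "valleys w = suffix_count starts_with_DU w"
  unfolding valleys_def suffix_count_def starts_with_DU_def
  by (rule arg_cong[where f = card]) auto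

lemma dxd_eq_suffix_count: "dxd w = suffix_count starts_with_DXD w"
  unfolding dxd_def suffix_count_def starts_with_DXD_def
  by (rule arg_cong[where f = card]) auto

lemma valleys_Nil [simp]: "valleys [] = 0"
  and valleys_singleton [simp]: "valleys [x] = 0"
  by (simp_all add: valleys_def)

lemma dxd_Nil [simp]: "dxd [] = 0"
  and dxd_singleton [simp]: "dxd [x] = 0"
  and dxd_doubleton [simp]: "dxd [x, y] = 0"
  by (simp_all add: dxd_def)

lemma valleys_append: "valleys (xs @ ys) = valleys xs + valleys (drop (length xs - 1) xs @ ys)"
  unfolding valleys_eq_suffix_count
  by (rule suffix_count_append) (auto simp: starts_with_DU_def nth_append)

lemma dxd_append: "dxd (xs @ ys) = dxd xs + dxd (drop (length xs - 2) xs @ ys)"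
  unfolding dxd_eq_suffix_count
  by (rule suffix_count_append) (auto simp: starts_with_DXD_def nth_append)

lemma valleys_Cons_Cons:
  "valleys (x # y # w) = (if x = D \<and> y = U then 1 else 0) + valleys (y # w)"
  by (simp add: valleys_eq_suffix_count starts_with_DU_def)

lemma dxd_Cons_Cons_Cons:
  "dxd (x # y # z # w) = (if x = D \<and> z = D then 1 else 0) + dxd (y # z # w)"
  by (simp add: dxd_eq_suffix_count starts_with_DXD_def)

lemma valleys_U_Cons [simp]: "valleys (U # w) = valleys w"
  by (simp add: valleys_eq_suffix_count starts_with_DU_def)

lemma dxd_U_Cons [simp]: "dxd (U # w) = dxd w"
  by (simp add: dxd_eq_suffix_count starts_with_DXD_def)

lemma valleys_snoc_D: "valleys (w @ [D]) = valleys w"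
proof (cases w rule: rev_cases)
  case (snoc v x)
  then show ?thesis
    using valleys_append[of w "[D]"] by (simp add: valleys_Cons_Cons)
qed simp

lemma term_desc_append_U_Cons: "term_desc (xs @ U # ys) = term_desc ys"
  by (simp add: term_desc_def takeWhile_append takeWhile_eq_all_conv[THEN iffD2])

lemma term_desc_snoc_D: "term_desc (w @ [D]) = Suc (term_desc w)"
  by (simp add: term_desc_def)

definition hill_at :: "step list \<Rightarrow> nat \<Rightarrow> bool" where
  "hill_at w i \<longleftrightarrow> i + 1 < length w \<and> w ! i = U \<and> w ! (i + 1) = D \<and> ht (take (i + 1) w) = 1"

lemma hill_free_iff_hill_at: "hill_free w \<longleftrightarrow> (\<forall>i. \<not> hill_at w i)"
  unfolding hill_free_def hill_at_def by blast

lemma ht_take_hill_at: "hill_at w i \<Longrightarrow> ht (take i w) = 0"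
  unfolding hill_at_def by (auto simp: take_Suc_conv_app_nth)

definition ground_desc_end :: "step list \<Rightarrow> nat \<Rightarrow> bool" where
  "ground_desc_end w j \<longleftrightarrow>
     0 < j \<and> j \<le> length w \<and> w ! (j - 1) = D \<and> (j = length w \<or> w ! j = U) \<and> ht (take j w) = 0"

lemma all_ground_desc_odd_iff:
  "all_ground_desc_odd w \<longleftrightarrow> (\<forall>j. ground_desc_end w j \<longrightarrow> odd (term_desc (take j w)))"
  unfolding all_ground_desc_odd_def ground_desc_end_def term_desc_def by blast

subsection \<open>The statistics in terms of trees\<close>

fun left_height :: "tree \<Rightarrow> nat" where
  "left_height Leaf = 0"
| "left_height (Node a b) = Suc (left_height a)"

lemma left_height_pos_iff [simp]: "0 < left_height t \<longleftrightarrow> t \<noteq> Leaf"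
  by (cases t) simp_all

lemma term_desc_path_of: "term_desc (path_of t) = left_height t"
  by (induction t) (simp_all add: term_desc_def[of "[]"] term_desc_append_U_Cons term_desc_snoc_D)

fun tree_valleys :: "tree \<Rightarrow> nat" where
  "tree_valleys Leaf = 0"
| "tree_valleys (Node a b) = tree_valleys a + tree_valleys b + (if b = Leaf then 0 else 1)"

lemma valleys_path_of: "valleys (path_of t) = tree_valleys t"
proof (induction t)
  case Leaf
  then show ?case by simp
next
  case (Node a b)
  have "valleys (path_of (Node a b))
      = valleys (path_of b) + valleys (drop (length (path_of b) - 1) (path_of b) @ U # path_of a @ [D])"
    using valleys_append[of "path_of b"] by simp
  also have "\<dots> = valleys (path_of b) + valleys (path_of a) + (if b = Leaf then 0 else 1)"
  proof (cases b)
    case (Node c d)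
    then obtain w where "path_of b = w @ [if c = Leaf then U else D, D]"
      using path_of_Node_snoc by blast
    moreover have "b \<noteq> Leaf"
      using Node by simp
    ultimately show ?thesis
      by (simp add: valleys_Cons_Cons valleys_snoc_D)
  qed (simp add: valleys_snoc_D)
  finally show ?case using Node.IH by simp
qed

fun tree_dxd :: "tree \<Rightarrow> nat" where
  "tree_dxd Leaf = 0"
| "tree_dxd (Node a b) = tree_dxd a + tree_dxd b
     + (if a = Leaf \<and> b \<noteq> Leaf then 1 else 0) + (if 2 \<le> left_height a then 1 else 0)"

lemma dxd_path_of_snoc_D:
  "dxd (path_of a @ [D]) = dxd (path_of a) + (if 2 \<le> left_height a then 1 else 0)"
proof (cases a)
  case Leaf
  then show ?thesis by simp
next
  case (Node c d)
  then obtain w where "path_of a = w @ [if c = Leaf then U else D, D]"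
    using path_of_Node_snoc by blast
  moreover have "2 \<le> left_height a \<longleftrightarrow> c \<noteq> Leaf"
    using Node by (auto simp: Suc_le_eq)
  ultimately show ?thesis
    using dxd_append[of "path_of a" "[D]"] by (simp add: dxd_Cons_Cons_Cons)
qed

lemma dxd_path_of: "dxd (path_of t) = tree_dxd t"
proof (induction t)
  case Leaf
  then show ?case by simp
next
  case (Node a b)
  have "dxd (path_of (Node a b))
      = dxd (path_of b) + dxd (drop (length (path_of b) - 2) (path_of b) @ U # path_of a @ [D])"
    using dxd_append[of "path_of b"] by simp
  also have "\<dots> = dxd (path_of b) + (if a = Leaf \<and> b \<noteq> Leaf then 1 else 0) + dxd (path_of a @ [D])"
  proof (cases b)
    case (Node c d)
    then obtain w where "path_of b = w @ [if c = Leaf then U else D, D]"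
      using path_of_Node_snoc by blast
    moreover have "dxd (D # U # path_of a @ [D]) = (if a = Leaf then 1 else 0) + dxd (path_of a @ [D])"
      using path_of_snoc_D_eq_Cons[of a] by (auto simp: dxd_Cons_Cons_Cons)
    moreover have "b \<noteq> Leaf"
      using Node by simp
    ultimately show ?thesis
      by (simp add: dxd_Cons_Cons_Cons)
  qed simp
  finally show ?case
    using Node.IH by (simp add: dxd_path_of_snoc_D)
qed

fun tree_starts_UD :: "tree \<Rightarrow> bool" where
  "tree_starts_UD Leaf \<longleftrightarrow> False"
| "tree_starts_UD (Node a b) \<longleftrightarrow> (if b = Leaf then a = Leaf else tree_starts_UD b)"

lemma starts_UD_Nil [simp]: "\<not> starts_UD []"
  by (simp add: starts_UD_def)

lemma starts_UD_path_of: "starts_UD (path_of t) \<longleftrightarrow> tree_starts_UD t"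
proof (induction t)
  case Leaf
  then show ?case by simp
next
  case (Node a b)
  show ?case
  proof (cases b)
    case Leaf
    obtain v where v: "path_of a @ [D] = (if a = Leaf then D else U) # v"
      using path_of_snoc_D_eq_Cons by blast
    have "take 2 (U # path_of a @ [D]) = [U, D] \<longleftrightarrow> a = Leaf"
      unfolding v by simp
    with Leaf show ?thesis by (simp add: starts_UD_def)
  next
    case (Node c d)
    then have "b \<noteq> Leaf" "2 \<le> length (path_of b)"
      by simp_all
    then have "starts_UD (path_of (Node a b)) \<longleftrightarrow> starts_UD (path_of b)"
      by (simp add: starts_UD_def del: length_path_of)
    with Node.IH(2) \<open>b \<noteq> Leaf\<close> show ?thesis
      by simp
  qed
qed

lemma hill_at_path_of_Node:
  "hill_at (path_of (Node a b)) i \<longleftrightarrow> hill_at (path_of b) i \<or> (i = length (path_of b) \<and> a = Leaf)"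
  (is "hill_at ?w i \<longleftrightarrow> _")
proof
  assume hill: "hill_at ?w i"
  then have "ht (take i ?w) = 0"
    by (rule ht_take_hill_at)
  with hill have "i \<le> length (path_of b)"
    using ht_take_path_of_Node_pos[of b i a] unfolding hill_at_def by fastforce
  then consider "i = length (path_of b)" | "i < length (path_of b)"
    by linarith
  then show "hill_at (path_of b) i \<or> (i = length (path_of b) \<and> a = Leaf)"
  proof cases
    case 1
    with hill have "(path_of a @ [D]) ! 0 = D"
      by (simp add: hill_at_def nth_append del: length_path_of)
    then have "a = Leaf"
      using path_of_snoc_D_eq_Cons[of a] by (auto split: if_splits)
    with 1 show ?thesis by simp
  next
    case 2
    then have "b \<noteq> Leaf" by auto
    then obtain v x where v: "path_of b = v @ [x, D]"
      using path_of_Node_snoc by (cases b) blast+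
    with 2 hill have "i + 1 < length (path_of b)"
      by (auto simp: hill_at_def nth_append less_Suc_eq)
    with hill show ?thesis
      by (simp add: hill_at_def nth_append del: length_path_of)
  qed
next
  assume "hill_at (path_of b) i \<or> (i = length (path_of b) \<and> a = Leaf)"
  then show "hill_at ?w i"
    by (auto simp: hill_at_def nth_append simp del: length_path_of)
qed

fun tree_hill_free :: "tree \<Rightarrow> bool" where
  "tree_hill_free Leaf \<longleftrightarrow> True"
| "tree_hill_free (Node a b) \<longleftrightarrow> a \<noteq> Leaf \<and> tree_hill_free b"

lemma hill_free_path_of: "hill_free (path_of t) \<longleftrightarrow> tree_hill_free t"
proof (induction t)
  case Leaf
  then show ?case by (simp add: hill_free_iff_hill_at hill_at_def)
next
  case (Node a b)
  then show ?case
    by (auto simp: hill_free_iff_hill_at hill_at_path_of_Node simp del: path_of.simps)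
qed

lemma ground_desc_end_path_of_Node:
  "ground_desc_end (path_of (Node a b)) j \<longleftrightarrow>
     ground_desc_end (path_of b) j \<or> j = length (path_of (Node a b))"
  (is "ground_desc_end ?w j \<longleftrightarrow> _")
proof
  assume desc_end: "ground_desc_end ?w j"
  show "ground_desc_end (path_of b) j \<or> j = length ?w"
  proof (cases "j \<le> length (path_of b)")
    case True
    with desc_end show ?thesis
      unfolding ground_desc_end_def
      by (auto simp: nth_append le_eq_less_or_eq split: if_splits simp del: length_path_of)
  next
    case False
    from desc_end have "j \<le> length ?w" "ht (take j ?w) = 0"
      unfolding ground_desc_end_def by blast+
    with False ht_take_path_of_Node_pos[of b j a] show ?thesis
      by (cases "j < length ?w") simp_all
  qed
next
  assume "ground_desc_end (path_of b) j \<or> j = length ?w"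
  then show "ground_desc_end ?w j"
    unfolding ground_desc_end_def
    by (auto simp: nth_append le_eq_less_or_eq simp del: length_path_of)
qed

fun tree_ground_desc_odd :: "tree \<Rightarrow> bool" where
  "tree_ground_desc_odd Leaf \<longleftrightarrow> True"
| "tree_ground_desc_odd (Node a b) \<longleftrightarrow> even (left_height a) \<and> tree_ground_desc_odd b"

lemma all_ground_desc_odd_path_of: "all_ground_desc_odd (path_of t) \<longleftrightarrow> tree_ground_desc_odd t"
proof (induction t)
  case Leaf
  then show ?case by (simp add: all_ground_desc_odd_iff ground_desc_end_def)
next
  case (Node a b)
  have "take j (path_of (Node a b)) = take j (path_of b)" if "ground_desc_end (path_of b) j" for j
    using that unfolding ground_desc_end_def by (simp del: length_path_of)
  then have "all_ground_desc_odd (path_of (Node a b)) \<longleftrightarrow>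
      all_ground_desc_odd (path_of b) \<and> odd (term_desc (path_of (Node a b)))"
    unfolding all_ground_desc_odd_iff ground_desc_end_path_of_Node
    by (auto simp del: path_of.simps)
  with Node.IH show ?case
    by (auto simp: term_desc_path_of simp del: path_of.simps)
qed

subsection \<open>The bijection\<close>

fun phi_tree :: "tree \<Rightarrow> tree" where
  "phi_tree Leaf = Leaf"
| "phi_tree (Node Leaf b) = Node Leaf (phi_tree b)"
| "phi_tree (Node (Node Leaf a) b) = Node (phi_tree (Node a b)) Leaf"
| "phi_tree (Node (Node (Node c d) a) b) =
     (if odd (left_height c) then Node (phi_tree (Node a b)) (phi_tree (Node c d))
      else Node (phi_tree (Node a d)) (phi_tree (Node c b)))"

lemma phi_tree_eq_Leaf_iff [simp]: "phi_tree t = Leaf \<longleftrightarrow> t = Leaf"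
  and Leaf_eq_phi_tree_iff [simp]: "Leaf = phi_tree t \<longleftrightarrow> t = Leaf"
  by (induction t rule: phi_tree.induct) auto

lemma size_phi_tree [simp]: "size (phi_tree t) = size t"
  by (induction t rule: phi_tree.induct) auto

lemma two_le_left_height_phi_tree: "2 \<le> left_height (phi_tree (Node a b)) \<longleftrightarrow> a \<noteq> Leaf"
  by (cases "Node a b" rule: phi_tree.cases)
    (auto simp: numeral_2_eq_2 Suc_le_eq gr0_conv_Suc[symmetric])

lemma tree_dxd_phi_tree: "tree_dxd (phi_tree t) = tree_valleys t"
  by (induction t rule: phi_tree.induct) (auto simp: two_le_left_height_phi_tree)

lemma tree_hill_free_phi_tree: "tree_hill_free (phi_tree t) \<longleftrightarrow> even (left_height t)"
  by (induction t rule: phi_tree.induct) auto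

lemma tree_starts_UD_phi_tree: "tree_starts_UD (phi_tree t) \<longleftrightarrow> t \<noteq> Leaf \<and> tree_ground_desc_odd t"
  by (induction t rule: phi_tree.induct) (auto simp: tree_hill_free_phi_tree)

lemma inj_phi_tree: "inj phi_tree"
proof (rule injI)
  show "s = t" if "phi_tree s = phi_tree t" for s t
    using that
  proof (induction s arbitrary: t rule: phi_tree.induct)
    case 1
    then show ?case by simp
  next
    case (2 b)
    then show ?case by (cases t rule: phi_tree.cases) (auto split: if_splits)
  next
    case (3 a b)
    then show ?case by (cases t rule: phi_tree.cases) (auto split: if_splits)
  next
    case (4 c d a b)
    then show ?case by (cases t rule: phi_tree.cases) (auto split: if_splits)
  qed
qed

definition dyck_phi :: "step list \<Rightarrow> step list" where
  "dyck_phi w = path_of (phi_tree (the_inv path_of w))"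

lemma dyck_phi_path_of [simp]: "dyck_phi (path_of t) = path_of (phi_tree t)"
  by (simp add: dyck_phi_def the_inv_f_f inj_path_of)

lemma dyck_phi_Nil [simp]: "dyck_phi [] = []"
  using dyck_phi_path_of[of Leaf] by simp

lemma bij_betw_dyck_phi: "bij_betw dyck_phi (dyck_paths n) (dyck_paths n)"
proof -
  have "inj_on dyck_phi (dyck_paths n)"
    unfolding dyck_paths_eq_image
    by (auto simp: inj_on_def dest: injD[OF inj_path_of] injD[OF inj_phi_tree])
  moreover have "dyck_phi ` dyck_paths n \<subseteq> dyck_paths n"
    unfolding dyck_paths_eq_image by auto
  ultimately show ?thesis
    using finite_dyck_paths endo_inj_surj unfolding bij_betw_def by blast
qed

theorem mainTheorem6:
  fixes n :: nat
  shows "\<exists>\<phi>. bij_betw \<phi> (dyck_paths n) (dyck_paths n)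
    \<and> (\<forall>P \<in> dyck_paths n. valleys P = dxd (\<phi> P))
    \<and> bij_betw \<phi> {P \<in> dyck_paths n. even (term_desc P)} {P \<in> dyck_paths n. hill_free P}
    \<and> bij_betw \<phi> {P \<in> dyck_paths n. P \<noteq> [] \<and> all_ground_desc_odd P}
                   {P \<in> dyck_paths n. starts_UD P}"
proof (intro exI[of _ dyck_phi] conjI)
  show bij: "bij_betw dyck_phi (dyck_paths n) (dyck_paths n)"
    by (rule bij_betw_dyck_phi)
  show "\<forall>P \<in> dyck_paths n. valleys P = dxd (dyck_phi P)"
    by (simp add: dyck_paths_eq_image valleys_path_of dxd_path_of tree_dxd_phi_tree)
  show "bij_betw dyck_phi {P \<in> dyck_paths n. even (term_desc P)} {P \<in> dyck_paths n. hill_free P}"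
    by (rule bij_betw_Collect[OF bij])
      (auto simp: dyck_paths_eq_image term_desc_path_of hill_free_path_of tree_hill_free_phi_tree)
  show "bij_betw dyck_phi {P \<in> dyck_paths n. P \<noteq> [] \<and> all_ground_desc_odd P}
      {P \<in> dyck_paths n. starts_UD P}"
    by (rule bij_betw_Collect[OF bij])
      (auto simp: dyck_paths_eq_image all_ground_desc_odd_path_of starts_UD_path_of
        tree_starts_UD_phi_tree)
qed

end
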